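(* Let $\mathcal{G}$ be a $p$-periodic graph on a vertex set $V$ with $|V|\ge 2$, and let $\mathcal{D}$ be its arena. If $\mathcal{D}$ is copwin, then $\mathcal{D}$ contains a temporal corner: there exist $t\in\mathbb{Z}_p$ and $u,v\in V$ with $u\neq v$ and $\Gamma_t(u,\mathcal{D})\subseteq\Gamma_{[t+1]_p}(v,\mathcal{D})$.
   Context: Let $V$ be a finite set and $p\ge 1$ an integer; $[t]_p$ denotes $t \bmod p$. A $p$-periodic graph $\mathcal{G}=(G_0,\dots,G_{p-1})^*$ is the infinite sequence of directed graphs $G_t=(V,E_{[t]_p})$, $t=0,1,2,\dots$, where $E_0,\dots,E_{p-1}\subseteq V\times V$ (self-loops allowed). Each $G_i$ is assumed sinkless: every vertex has at least one outgoing edge in $G_i$. An arena on $V$ of length $p$ is a directed graph with vertex set $\mathbb{Z}_p\times V$ (whose elements are called temporal nodes) all of whose edges have the form $((i,w),([i+1]_p,w'))$. The arena of $\mathcal{G}$ is the arena $\mathcal{D}$ with $((i,u),([i+1]_p,v))\in E(\mathcal{D})$ iff $(u,v)\in E_i$. For an arena $\mathcal{M}$, $t\in\mathbb{Z}_p$ and $u\in V$, write $\Gamma_t(u,\mathcal{M})=\{v\in V : ((t,u),([t+1]_p,v))\in E(\mathcal{M})\}$. The (one-cop, restless) game on $\mathcal{G}$: first the cop chooses a vertex, then the robber chooses a vertex. In each round $t=0,1,2,\dots$, with the cop at $c$ and the robber at $r$, the cop must move to some $c'\in\Gamma_{[t]_p}(c,\mathcal{D})$; if $c'=r$ the cop wins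 and the game ends; otherwise the robber must move to some $r'\in\Gamma_{[t]_p}(r,\mathcal{D})$, and round $t+1$ starts with the cop at $c'$ and the robber at $r'$. Both players have full information. A configuration $(t,c,r)$ with $t\in\mathbb{Z}_p$, $c,r\in V$ is the state at the start of a round whose index is congruent to $t$ mod $p$, with the cop at $c$ and the robber at $r$, cop to move; it is copwin if, starting from it, the cop has a strategy that captures the robber after finitely many rounds against every robber strategy. $\mathcal{D}$ (equivalently $\mathcal{G}$) is copwin if there is $c\in V$ such that $(0,c,r)$ is copwin for every $r\in V$. *)

theory Defs
  imports Main
begin

text \<open>A p-periodic graph on vertex set V: edge sets E 0, ..., E (p-1), each a
  sinkless relation on V. Indices in Z_p are represented by naturals below p.\<close>
definition periodic_graph :: "nat \<Rightarrow> 'v set \<Rightarrow> (nat \<Rightarrow> ('v \<times> 'v) set) \<Rightarrow> bool" where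
  "periodic_graph p V E \<longleftrightarrow> p \<ge> 1 \<and> finite V \<and>
     (\<forall>i<p. E i \<subseteq> V \<times> V \<and> (\<forall>u\<in>V. \<exists>v. (u, v) \<in> E i))"

definition arena :: "nat \<Rightarrow> (nat \<Rightarrow> ('v \<times> 'v) set) \<Rightarrow> ((nat \<times> 'v) \<times> (nat \<times> 'v)) set" where
  "arena p E = {((i, u), ((i + 1) mod p, v)) | i u v. i < p \<and> (u, v) \<in> E i}"

definition Gamma :: "nat \<Rightarrow> nat \<Rightarrow> 'v \<Rightarrow> ((nat \<times> 'v) \<times> (nat \<times> 'v)) set \<Rightarrow> 'v set" where
  "Gamma p t u M = {v. ((t, u), ((t + 1) mod p, v)) \<in> M}"

text \<open>Copwin configurations (t, c, r) of the one-cop restless game on arena M: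
  the cop moves to some c' among the out-neighbours; either c' = r (capture) or for
  every robber reply r' the next configuration is again copwin. Being the least such
  set, this is exactly: the cop can force capture after finitely many rounds.\<close>
inductive copwin_conf :: "nat \<Rightarrow> ((nat \<times> 'v) \<times> (nat \<times> 'v)) set \<Rightarrow> nat \<Rightarrow> 'v \<Rightarrow> 'v \<Rightarrow> bool"
  for p M where
  step: "c' \<in> Gamma p t c M \<Longrightarrow>
         (c' = r \<or> (\<forall>r' \<in> Gamma p t r M. copwin_conf p M ((t + 1) mod p) c' r')) \<Longrightarrow>
         copwin_conf p M t c r"

definition copwin :: "nat \<Rightarrow> 'v set \<Rightarrow> ((nat \<times> 'v) \<times> (nat \<times> 'v)) set \<Rightarrow> bool" where
  "copwin p V M \<longleftrightarrow> (\<exists>c\<in>V. \<forall>r\<in>V. copwin_conf p M 0 c r)"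

end

theory Submission
  imports Defs
begin

(* Without a temporal corner the cop can never afford a move that does not capture at once:
   if the cop moves to c' ~= r and still wins against every reply r' in Gamma_t(r), then every
   such r' is adjacent to c' at time t + 1, i.e. Gamma_t(r) <= Gamma_(t+1)(c'), which is a corner.
   Hence a winning cop at c must already see every robber position in Gamma_0(c); so
   Gamma_0(c) = V, and any u ~= c gives the corner Gamma_(p-1)(u) <= V = Gamma_0(c). *)

definition temporal_corner :: "nat \<Rightarrow> 'v set \<Rightarrow> (nat \<Rightarrow> ('v \<times> 'v) set) \<Rightarrow> bool" where
  "temporal_corner p V E \<longleftrightarrow> (\<exists>t<p. \<exists>u\<in>V. \<exists>v\<in>V. u \<noteq> v \<and>
     Gamma p t u (arena p E) \<subseteq> Gamma p ((t + 1) mod p) v (arena p E))"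

lemma temporal_cornerI:
  assumes "t < p" "u \<in> V" "v \<in> V" "u \<noteq> v"
    and "Gamma p t u (arena p E) \<subseteq> Gamma p ((t + 1) mod p) v (arena p E)"
  shows "temporal_corner p V E"
  using assms unfolding temporal_corner_def by blast

lemma Gamma_arena: "Gamma p t u (arena p E) = {v. t < p \<and> (u, v) \<in> E t}"
  by (auto simp: Gamma_def arena_def)

lemma Gamma_arena_subset:
  assumes "periodic_graph p V E"
  shows "Gamma p t u (arena p E) \<subseteq> V"
  using assms by (auto simp: Gamma_arena periodic_graph_def)

lemma copwin_conf_captures_next_round:
  assumes "copwin_conf p (arena p E) t c r"
    and "periodic_graph p V E" and "r \<in> V" and "\<not> temporal_corner p V E"
  shows "r \<in> Gamma p t c (arena p E)"
  using assms
proof (induction rule: copwin_conf.induct)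
  case (step c' t c r)
  have "c' = r"
  proof (rule ccontr)
    assume "c' \<noteq> r"
    with step.IH have wins: "\<forall>r' \<in> Gamma p t r (arena p E).
        copwin_conf p (arena p E) ((t + 1) mod p) c' r' \<and>
        (r' \<in> V \<longrightarrow> r' \<in> Gamma p ((t + 1) mod p) c' (arena p E))"
      using step.prems by blast
    have "Gamma p t r (arena p E) \<subseteq> Gamma p ((t + 1) mod p) c' (arena p E)"
      using wins Gamma_arena_subset[OF step.prems(1)] by blast
    moreover have "t < p" and "c' \<in> V"
      using step.hyps(1) Gamma_arena_subset[OF step.prems(1)] by (auto simp: Gamma_arena)
    ultimately have "temporal_corner p V E"
      using \<open>r \<in> V\<close> \<open>c' \<noteq> r\<close> by (blast intro: temporal_cornerI)
    with step.prems(3) show False ..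
  qed
  with step.hyps(1) show ?case by simp
qed

theorem mainTheorem1:
  fixes p :: nat and V :: "'v set" and E :: "nat \<Rightarrow> ('v \<times> 'v) set"
  assumes "periodic_graph p V E"
    and "card V \<ge> 2"
    and "copwin p V (arena p E)"
  shows "\<exists>t<p. \<exists>u\<in>V. \<exists>v\<in>V. u \<noteq> v \<and>
           Gamma p t u (arena p E) \<subseteq> Gamma p ((t + 1) mod p) v (arena p E)"
proof (rule ccontr)
  assume "\<not> ?thesis"
  then have no_corner: "\<not> temporal_corner p V E"
    by (simp add: temporal_corner_def)
  obtain c where "c \<in> V" and c_wins: "\<forall>r\<in>V. copwin_conf p (arena p E) 0 c r"
    using assms(3) by (auto simp: copwin_def)
  have V_adjacent: "V \<subseteq> Gamma p 0 c (arena p E)"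
    using copwin_conf_captures_next_round[OF _ assms(1) _ no_corner] c_wins by blast
  obtain u where "u \<in> V" "u \<noteq> c"
  proof -
    have "V \<noteq> {c}"
      using assms(2) by auto
    with \<open>c \<in> V\<close> that show ?thesis by blast
  qed
  have "p \<ge> 1"
    using assms(1) by (simp add: periodic_graph_def)
  then have "Gamma p (p - 1) u (arena p E) \<subseteq> Gamma p ((p - 1 + 1) mod p) c (arena p E)"
    using Gamma_arena_subset[OF assms(1)] V_adjacent by auto
  with \<open>p \<ge> 1\<close> \<open>u \<in> V\<close> \<open>c \<in> V\<close> \<open>u \<noteq> c\<close> have "temporal_corner p V E"
    by (intro temporal_cornerI) auto
  with no_corner show False ..
qed

end
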